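(* Let $m\ge2$, $N=2m$, and let $G$ be the "dense center" graph: vertices $c_1,\dots,c_m$ forming a complete graph, together with leaves $\ell_1,\dots,\ell_m$, where $\ell_j$ is adjacent only to $c_j$. Then $n_{\max}(G)=m$, the roots are $c_1,\dots,c_m$, and $\beta_C^G=\tfrac32N-1$. Let $\mathcal L\subseteq\{\ell_1,\dots,\ell_m\}$ with $|\mathcal L|<m$, let $j$ be such that $\ell_j\notin\mathcal L$, and $G'=G[V\setminus\mathcal L]$. Then $$\langle I_{c_j}^{G*}\rangle_\rho=\langle I_{c_j}^{G'*}\rangle_\rho=(2\sqrt2-1)m+N-1-(\sqrt2+1)|\mathcal L| .$$ Consequently $\langle I_{c_j}^{G'*}\rangle_\rho>\beta_C^{G'}$ if and only if $|\mathcal L|<\frac{\sqrt2-1}{\sqrt2}N$, and $\langle I_{c_j}^{G*}\rangle_\rho>\beta_C^{G}$ if and only if $|\mathcal L|<\frac{\sqrt2-1}{\sqrt2+1}N$.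
   Context: Qubits are labelled $1,\dots,N$; $X_i,Z_i$ denote the Pauli $X$ and $Z$ operators on qubit $i$. For a graph $H$ with vertex set $V(H)\subseteq\{1,\dots,N\}$, $\mathcal N_i^H$ is the neighbour set of $i$, $\overline{\mathcal N_i^H}=\mathcal N_i^H\cup\{i\}$, $n_{\max}(H)$ the maximum degree; a root is a vertex of degree $n_{\max}(H)$. $S_i^H=X_i\prod_{j\in\mathcal N_i^H}Z_j$. The graph state $|\phi^G\rangle$ is the unique state with $S_i^G|\phi^G\rangle=|\phi^G\rangle$ for all $i$. For a vertex $r$ of $H$, $I_r^{H*}=\sqrt2\,n_{\max}(H)S_r^H+\sqrt2\sum_{i\in\mathcal N_r^H}S_i^H+\sum_{i\in V(H)\setminus\overline{\mathcal N_r^H}}S_i^H$, and $\beta_C^H=n_{\max}(H)+|V(H)|-1$. For lost set $\mathcal L$, $G'=G[V\setminus\mathcal L]$ (labels kept, identity on $\mathcal L$) and $\rho=\mathrm{Tr}_{\mathcal L}(|\phi^G\rangle\langle\phi^G|)\otimes\bigotimes_{l\in\mathcal L}|0\rangle\langle0|_l$; $\langle A\rangle_\rho=\mathrm{Tr}(A\rho)$. *)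

theory Defs
  imports Complex_Main "Jordan_Normal_Form.Matrix"
begin

(* Graphs: a pair (V, E) with V a finite set of qubit labels and E a symmetric
   irreflexive edge relation on V. *)
type_synonym graph = "nat set \<times> (nat \<times> nat) set"

definition verts :: "graph \<Rightarrow> nat set" where "verts H = fst H"
definition edges :: "graph \<Rightarrow> (nat \<times> nat) set" where "edges H = snd H"

definition nbrs :: "graph \<Rightarrow> nat \<Rightarrow> nat set" where
  "nbrs H i = {j. (i, j) \<in> edges H}"

definition cnbrs :: "graph \<Rightarrow> nat \<Rightarrow> nat set" where
  "cnbrs H i = insert i (nbrs H i)"

definition deg :: "graph \<Rightarrow> nat \<Rightarrow> nat" where
  "deg H i = card (nbrs H i)"

definition nmax :: "graph \<Rightarrow> nat" where
  "nmax H = Max (deg H ` verts H)"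

definition roots :: "graph \<Rightarrow> nat set" where
  "roots H = {v \<in> verts H. deg H v = nmax H}"

(* induced subgraph G[V \ L] (labels kept) *)
definition induced_del :: "graph \<Rightarrow> nat set \<Rightarrow> graph" where
  "induced_del H L = (verts H - L, {(a, b) \<in> edges H. a \<notin> L \<and> b \<notin> L})"

definition betaC :: "graph \<Rightarrow> real" where
  "betaC H = real (nmax H) + real (card (verts H)) - 1"

(* N-qubit Hilbert space C^(2^N); computational basis index x < 2^N,
   qubit i (1 \<le> i \<le> N) corresponds to bit (i-1) of x. *)
definition qbit :: "nat \<Rightarrow> nat \<Rightarrow> nat" where
  "qbit x i = x div 2 ^ (i - 1) mod 2"

definition flip :: "nat \<Rightarrow> nat \<Rightarrow> nat" where
  "flip x i = (if qbit x i = 0 then x + 2 ^ (i - 1) else x - 2 ^ (i - 1))"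

definition Xop :: "nat \<Rightarrow> nat \<Rightarrow> complex mat" where
  "Xop N i = mat (2 ^ N) (2 ^ N) (\<lambda>(r, c). if r = flip c i then 1 else 0)"

definition Zop :: "nat \<Rightarrow> nat \<Rightarrow> complex mat" where
  "Zop N i = mat (2 ^ N) (2 ^ N)
     (\<lambda>(r, c). if r = c then (if qbit c i = 0 then 1 else -1) else 0)"

definition mprod :: "nat \<Rightarrow> complex mat list \<Rightarrow> complex mat" where
  "mprod N As = foldr (*) As (1\<^sub>m (2 ^ N))"

definition msum :: "nat \<Rightarrow> complex mat list \<Rightarrow> complex mat" where
  "msum N As = foldr (+) As (0\<^sub>m (2 ^ N) (2 ^ N))"

definition Sop :: "nat \<Rightarrow> graph \<Rightarrow> nat \<Rightarrow> complex mat" where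
  "Sop N H i = Xop N i * mprod N (map (Zop N) (sorted_list_of_set (nbrs H i)))"

definition Iop :: "nat \<Rightarrow> graph \<Rightarrow> nat \<Rightarrow> complex mat" where
  "Iop N H r =
     (complex_of_real (sqrt 2 * real (nmax H))) \<cdot>\<^sub>m Sop N H r
   + (complex_of_real (sqrt 2)) \<cdot>\<^sub>m msum N (map (Sop N H) (sorted_list_of_set (nbrs H r)))
   + msum N (map (Sop N H) (sorted_list_of_set (verts H - cnbrs H r)))"

definition outer :: "complex vec \<Rightarrow> complex mat" where
  "outer v = mat (dim_vec v) (dim_vec v) (\<lambda>(a, b). v $ a * cnj (v $ b))"

(* density matrix |phi^G><phi^G| of the graph state: the (unique) projector onto a
   unit vector stabilised by all S_i^G *)
definition graph_state_dm :: "nat \<Rightarrow> graph \<Rightarrow> complex mat" where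
  "graph_state_dm N H = (THE \<rho>. \<exists>v \<in> carrier_vec (2 ^ N).
      (\<Sum>a<2 ^ N. (cmod (v $ a))\<^sup>2) = 1 \<and>
      (\<forall>i \<in> verts H. Sop N H i *\<^sub>v v = v) \<and> \<rho> = outer v)"

(* Tr_L(rho) \<otimes> |0><0|_L, qubit labels kept *)
definition lost_state :: "nat \<Rightarrow> nat set \<Rightarrow> complex mat \<Rightarrow> complex mat" where
  "lost_state N L \<rho> = mat (2 ^ N) (2 ^ N) (\<lambda>(x, y).
     if (\<forall>l \<in> L. qbit x l = 0 \<and> qbit y l = 0)
     then (\<Sum>z \<in> {z. z < 2 ^ N \<and> (\<forall>i \<in> {1..N} - L. qbit z i = 0)}. \<rho> $$ (x + z, y + z))
     else 0)"

definition mtrace :: "complex mat \<Rightarrow> complex" where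
  "mtrace A = (\<Sum>a<dim_row A. A $$ (a, a))"

definition expect :: "complex mat \<Rightarrow> complex mat \<Rightarrow> complex" where
  "expect A \<rho> = mtrace (A * \<rho>)"

(* dense center graph: centers c_j = j, leaves l_j = m + j (j = 1..m) *)
definition dense_center :: "nat \<Rightarrow> graph" where
  "dense_center m = ({1..2 * m},
     {(a, b). a \<in> {1..m} \<and> b \<in> {1..m} \<and> a \<noteq> b}
     \<union> {(j, m + j) | j. j \<in> {1..m}} \<union> {(m + j, j) | j. j \<in> {1..m}})"

end

theory Submission
  imports Defs
begin

text \<open>
  The graph state has amplitudes \<open>\<plusminus>2\<^sup>-\<^sup>N\<^sup>/\<^sup>2\<close>, so \<open>|\<phi>\<^sup>G\<rangle>\<langle>\<phi>\<^sup>G|\<close> pairs a basis state \<open>x\<close> with its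
  \<open>X\<^sub>i\<close>-flip by the \<open>Z\<close>-parity of \<open>x\<close> on the neighbours of \<open>i\<close>. Resetting the lost qubits \<open>L\<close> to \<open>|0\<rangle>\<close>
  after tracing them out kills every such entry when \<open>i \<in> L\<close>; otherwise it multiplies the
  parity by the parity on the lost neighbours, whose average over the basis is \<open>0\<close> unless no
  neighbour is lost. Hence \<open>\<langle>S\<^sub>i\<rangle>\<^sub>\<rho>\<close> is \<open>1\<close> if neither \<open>i\<close> nor a neighbour of \<open>i\<close> is lost and \<open>0\<close>
  otherwise, both for \<open>G\<close> and for \<open>G' = G[V \ L]\<close>, and \<open>\<langle>I\<^sub>r\<^sup>*\<rangle>\<^sub>\<rho>\<close> counts the surviving
  stabilisers with weights \<open>\<surd>2 n\<^sub>m\<^sub>a\<^sub>x\<close>, \<open>\<surd>2\<close> and \<open>1\<close>.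

  In the dense center graph with only leaves lost, a vertex survives iff the leaf at its centre
  is kept, giving \<open>\<surd>2 m + \<surd>2 (m - |L|) + (m - 1 - |L|)\<close> for both \<open>G\<close> and \<open>G'\<close> (which still has
  maximum degree \<open>m\<close> at \<open>c\<^sub>j\<close>); comparing with \<open>\<beta>\<^sub>C\<close> gives the two thresholds.
\<close>

section \<open>Qubit indices\<close>

lemma qbit_eq_if_bit: "qbit x i = (if bit x (i - 1) then 1 else 0)"
  unfolding qbit_def by (simp add: bit_iff_odd odd_iff_mod_2_eq_one)

lemma qbit_eq_0_iff: "qbit x i = 0 \<longleftrightarrow> \<not> bit x (i - 1)"
  by (simp add: qbit_eq_if_bit)

lemma qbit_le_1: "qbit x i \<le> 1"
  unfolding qbit_def by simp

lemma unset_bit_nat_eq_diff: "bit (x::nat) n \<Longrightarrow> unset_bit n x = x - 2 ^ n"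
proof -
  assume "bit x n"
  then have "set_bit n (unset_bit n x) = x"
    by (intro bit_eqI) (auto simp: bit_set_bit_iff bit_unset_bit_iff)
  moreover have "set_bit n (unset_bit n x) = unset_bit n x + 2 ^ n"
    by (simp add: set_bit_eq bit_unset_bit_iff)
  ultimately show ?thesis by simp
qed

lemma flip_eq_flip_bit: "flip x i = flip_bit (i - 1) x"
  unfolding flip_def flip_bit_eq_if qbit_eq_0_iff
  by (simp add: set_bit_eq unset_bit_nat_eq_diff)

lemma bit_flip_iff: "bit (flip x i) n \<longleftrightarrow> (if n = i - 1 then \<not> bit x n else bit x n)"
  by (auto simp: flip_eq_flip_bit bit_flip_bit_iff)

lemma flip_flip [simp]: "flip (flip x i) i = x"
  by (rule bit_eqI) (auto simp: bit_flip_iff)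

lemma flip_eq_iff_eq_flip: "flip x i = y \<longleftrightarrow> x = flip y i"
  by auto

lemma less_power2_iff_bits: "(x::nat) < 2 ^ N \<longleftrightarrow> (\<forall>n. bit x n \<longrightarrow> n < N)"
proof
  assume "x < 2 ^ N"
  then have "take_bit N x = x" by (simp add: take_bit_nat_eq_self_iff)
  then show "\<forall>n. bit x n \<longrightarrow> n < N" by (metis bit_take_bit_iff)
next
  assume "\<forall>n. bit x n \<longrightarrow> n < N"
  then have "take_bit N x = x" by (intro bit_eqI) (auto simp: bit_take_bit_iff)
  then show "x < 2 ^ N" by (metis take_bit_nat_less_exp)
qed

lemma flip_less_power2: "x < 2 ^ N \<Longrightarrow> 1 \<le> i \<Longrightarrow> i \<le> N \<Longrightarrow> flip x i < 2 ^ N"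
  unfolding less_power2_iff_bits by (auto simp: bit_flip_iff split: if_splits)

lemma bij_betw_flip: "1 \<le> i \<Longrightarrow> i \<le> N \<Longrightarrow> bij_betw (\<lambda>x. flip x i) {..<2 ^ N} {..<2 ^ N}"
  by (rule bij_betw_byWitness[where f' = "\<lambda>x. flip x i"]) (auto simp: flip_less_power2)

lemma qbit_flip:
  "1 \<le> i \<Longrightarrow> 1 \<le> j \<Longrightarrow> qbit (flip x i) j = (if j = i then 1 - qbit x i else qbit x j)"
  by (auto simp: qbit_eq_if_bit bit_flip_iff)

lemma flip_induct [consumes 1, case_names zero flip]:
  assumes "x < 2 ^ N" and "P 0"
    and step: "\<And>x i. x < 2 ^ N \<Longrightarrow> 1 \<le> i \<Longrightarrow> i \<le> N \<Longrightarrow> P x \<Longrightarrow> P (flip x i)"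
  shows "P x"
  using assms(1)
proof (induction x rule: less_induct)
  case (less x)
  show ?case
  proof (cases "x = 0")
    case True
    then show ?thesis using \<open>P 0\<close> by simp
  next
    case False
    then obtain n where n: "bit x n"
      using bit_eqI[of x 0] by auto
    with less.prems have "n < N" by (auto simp: less_power2_iff_bits)
    define y where "y = flip x (Suc n)"
    have "y = x - 2 ^ n"
      using n by (simp add: y_def flip_def qbit_eq_0_iff)
    with False n have "y < x" by (simp add: bit_imp_possible_bit)
    moreover have "y < 2 ^ N" using \<open>y < x\<close> less.prems by simp
    ultimately have "P y" by (rule less.IH)
    then have "P (flip y (Suc n))" using step \<open>y < 2 ^ N\<close> \<open>n < N\<close> by simp
    then show ?thesis by (simp add: y_def)
  qed
qed

section \<open>Pauli operators and expectation values\<close>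

definition diag_mat :: "nat \<Rightarrow> (nat \<Rightarrow> complex) \<Rightarrow> complex mat" where
  "diag_mat N f = mat (2 ^ N) (2 ^ N) (\<lambda>(r, c). if r = c then f c else 0)"

definition z_sign :: "nat \<Rightarrow> nat \<Rightarrow> complex" where
  "z_sign j x = (if qbit x j = 0 then 1 else -1)"

definition z_parity :: "nat set \<Rightarrow> nat \<Rightarrow> complex" where
  "z_parity M x = (\<Prod>j\<in>M. z_sign j x)"

lemma diag_mat_carrier [simp]: "diag_mat N f \<in> carrier_mat (2 ^ N) (2 ^ N)"
  by (simp add: diag_mat_def)

lemma diag_mat_mult: "diag_mat N f * diag_mat N g = diag_mat N (\<lambda>x. f x * g x)"
proof (rule eq_matI)
  fix r c assume "r < dim_row (diag_mat N (\<lambda>x. f x * g x))" "c < dim_col (diag_mat N (\<lambda>x. f x * g x))"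
  then have rc: "r < 2 ^ N" "c < 2 ^ N" by (auto simp: diag_mat_def)
  have "(diag_mat N f * diag_mat N g) $$ (r, c)
      = (\<Sum>k<2 ^ N. diag_mat N f $$ (r, k) * diag_mat N g $$ (k, c))"
    using rc by (simp add: diag_mat_def scalar_prod_def atLeast0LessThan)
  also have "\<dots> = (\<Sum>k<2 ^ N. if k = r then diag_mat N f $$ (r, r) * diag_mat N g $$ (r, c) else 0)"
    by (rule sum.cong) (auto simp: diag_mat_def rc)
  also have "\<dots> = diag_mat N (\<lambda>x. f x * g x) $$ (r, c)"
    using rc by (simp add: diag_mat_def)
  finally show "(diag_mat N f * diag_mat N g) $$ (r, c) = diag_mat N (\<lambda>x. f x * g x) $$ (r, c)" .
qed (auto simp: diag_mat_def)

lemma mprod_Zop: "mprod N (map (Zop N) js) = diag_mat N (\<lambda>x. prod_list (map (\<lambda>j. z_sign j x) js))"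
proof -
  have "Zop N j = diag_mat N (z_sign j)" for j
    unfolding Zop_def diag_mat_def z_sign_def by (rule cong_mat) auto
  moreover have "1\<^sub>m (2 ^ N) = diag_mat N (\<lambda>_. 1)"
    unfolding diag_mat_def by (rule eq_matI) auto
  ultimately show ?thesis
    by (induction js) (simp_all add: mprod_def diag_mat_mult)
qed

lemma Sop_eq_Xop_mult_diag_mat:
  "finite (nbrs H i) \<Longrightarrow> Sop N H i = Xop N i * diag_mat N (z_parity (nbrs H i))"
  unfolding Sop_def mprod_Zop z_parity_def
  by (metis distinct_sorted_list_of_set prod.distinct_set_conv_list set_sorted_list_of_set)

lemma Sop_carrier [simp]: "Sop N H i \<in> carrier_mat (2 ^ N) (2 ^ N)"
  unfolding Sop_def mprod_Zop by (rule mult_carrier_mat[OF _ diag_mat_carrier]) (simp add: Xop_def)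

lemma Sop_entry:
  assumes "finite (nbrs H i)" "r < 2 ^ N" "c < 2 ^ N"
  shows "Sop N H i $$ (r, c) = (if r = flip c i then z_parity (nbrs H i) c else 0)"
proof -
  have "Sop N H i $$ (r, c) = (\<Sum>k<2 ^ N. Xop N i $$ (r, k) * diag_mat N (z_parity (nbrs H i)) $$ (k, c))"
    using assms by (simp add: Sop_eq_Xop_mult_diag_mat diag_mat_def Xop_def scalar_prod_def atLeast0LessThan)
  also have "\<dots> = (\<Sum>k<2 ^ N. if k = c then Xop N i $$ (r, c) * z_parity (nbrs H i) c else 0)"
    by (rule sum.cong) (auto simp: diag_mat_def assms)
  finally show ?thesis
    using assms by (simp add: Xop_def)
qed

lemma z_parity_flip: "i \<notin> M \<Longrightarrow> 1 \<le> i \<Longrightarrow> 0 \<notin> M \<Longrightarrow> z_parity M (flip x i) = z_parity M x"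
  unfolding z_parity_def z_sign_def
  by (intro prod.cong refl) (metis One_nat_def not_less_eq_eq not_one_le_zero qbit_flip le_0_eq)

lemma z_parity_square: "z_parity M x * z_parity M x = 1"
  unfolding z_parity_def prod.distrib[symmetric] by (intro prod.neutral ballI) (simp add: z_sign_def)

lemma norm_z_parity: "cmod (z_parity M x) = 1"
  unfolding z_parity_def prod_norm[symmetric] by (intro prod.neutral ballI) (simp add: z_sign_def)

lemma z_parity_diff_mult: "finite M \<Longrightarrow> z_parity (M - L) x * z_parity M x = z_parity (M \<inter> L) x"
proof -
  assume "finite M"
  then have "z_parity M x = z_parity (M - L) x * z_parity (M \<inter> L) x"
    unfolding z_parity_def by (subst prod.union_disjoint[symmetric]) (auto simp: Un_Diff_Int)
  then show ?thesis
    by (metis mult.assoc mult_1 z_parity_square)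
qed

text \<open>Flipping a qubit of \<open>M\<close> is an involution of the basis that negates the parity.\<close>

lemma sum_z_parity_eq_0:
  assumes "finite M" "M \<subseteq> {1..N}" "l \<in> M"
  shows "(\<Sum>x<2 ^ N. z_parity M x) = 0"
proof -
  have l: "1 \<le> l" "l \<le> N" using assms by auto
  have neg: "z_parity M (flip x l) = - z_parity M x" for x
  proof -
    have split: "z_parity M y = z_sign l y * z_parity (M - {l}) y" for y
      unfolding z_parity_def using assms(1,3) by (rule prod.remove)
    have "z_parity (M - {l}) (flip x l) = z_parity (M - {l}) x"
      by (rule z_parity_flip) (use assms l in auto)
    moreover have "z_sign l (flip x l) = - z_sign l x"
      using l qbit_le_1[of x l] by (auto simp: z_sign_def qbit_flip)
    ultimately show ?thesis unfolding split by simp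
  qed
  have "(\<Sum>x<2 ^ N. z_parity M x) = (\<Sum>x<2 ^ N. z_parity M (flip x l))"
    using sum.reindex_bij_betw[OF bij_betw_flip[OF l], of "z_parity M"] by simp
  also have "\<dots> = - (\<Sum>x<2 ^ N. z_parity M x)"
    by (simp only: neg sum_negf)
  finally show ?thesis by simp
qed

lemma sum_z_parity:
  assumes "finite M" "M \<subseteq> {1..N}"
  shows "(\<Sum>x<2 ^ N. z_parity M x) = of_bool (M = {}) * 2 ^ N"
  using assms sum_z_parity_eq_0[OF assms] by (cases "M = {}") (auto simp: z_parity_def)

lemma expect_eq_sum:
  "A \<in> carrier_mat n n \<Longrightarrow> R \<in> carrier_mat n n \<Longrightarrow>
   expect A R = (\<Sum>a<n. \<Sum>c<n. A $$ (a, c) * R $$ (c, a))"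
  unfolding expect_def mtrace_def by (auto simp: scalar_prod_def atLeast0LessThan intro!: sum.cong)

lemma expect_add:
  assumes "A \<in> carrier_mat n n" "B \<in> carrier_mat n n" "R \<in> carrier_mat n n"
  shows "expect (A + B) R = expect A R + expect B R"
proof -
  have "A + B \<in> carrier_mat n n" using assms by simp
  with assms show ?thesis
    by (simp add: expect_eq_sum[of _ n] distrib_right sum.distrib)
qed

lemma expect_smult:
  assumes "A \<in> carrier_mat n n" "R \<in> carrier_mat n n"
  shows "expect (k \<cdot>\<^sub>m A) R = k * expect A R"
  using assms
  by (simp add: expect_eq_sum[OF smult_carrier_mat[OF assms(1)] assms(2)] expect_eq_sum[of _ n]
      sum_distrib_left mult.assoc)

lemma msum_carrier:
  "\<forall>A\<in>set As. A \<in> carrier_mat (2 ^ N) (2 ^ N) \<Longrightarrow> msum N As \<in> carrier_mat (2 ^ N) (2 ^ N)"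
  by (induction As) (auto simp: msum_def)

lemma expect_msum:
  "\<forall>A\<in>set As. A \<in> carrier_mat (2 ^ N) (2 ^ N) \<Longrightarrow> R \<in> carrier_mat (2 ^ N) (2 ^ N) \<Longrightarrow>
   expect (msum N As) R = (\<Sum>A\<leftarrow>As. expect A R)"
proof (induction As)
  case Nil
  then show ?case by (simp add: msum_def expect_eq_sum[OF zero_carrier_mat])
next
  case (Cons A As)
  then show ?case
    using msum_carrier[of As N] by (simp add: msum_def expect_add[where n = "2 ^ N"])
qed

lemma expect_Iop:
  assumes "finite (nbrs H r)" "finite (verts H - cnbrs H r)" "R \<in> carrier_mat (2 ^ N) (2 ^ N)"
  shows "expect (Iop N H r) R =
     complex_of_real (sqrt 2 * real (nmax H)) * expect (Sop N H r) R
   + complex_of_real (sqrt 2) * (\<Sum>i\<in>nbrs H r. expect (Sop N H i) R)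
   + (\<Sum>i\<in>verts H - cnbrs H r. expect (Sop N H i) R)"
proof -
  have sum_S: "expect (msum N (map (Sop N H) (sorted_list_of_set S))) R = (\<Sum>i\<in>S. expect (Sop N H i) R)"
    if "finite S" for S
    using that assms(3) by (simp add: expect_msum sum_list_distinct_conv_sum_set)
  have carrier: "msum N (map (Sop N H) (sorted_list_of_set S)) \<in> carrier_mat (2 ^ N) (2 ^ N)" for S
    by (rule msum_carrier) auto
  show ?thesis
    unfolding Iop_def using assms carrier
    by (simp add: expect_add[where n = "2 ^ N"] expect_smult[where n = "2 ^ N"] sum_S)
qed

lemma expect_Sop:
  assumes "finite (nbrs H i)" "i \<notin> nbrs H i" "0 \<notin> nbrs H i" "1 \<le> i" "i \<le> N"
    and "R \<in> carrier_mat (2 ^ N) (2 ^ N)"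
  shows "expect (Sop N H i) R = (\<Sum>x<2 ^ N. z_parity (nbrs H i) x * R $$ (flip x i, x))"
proof -
  have "expect (Sop N H i) R = (\<Sum>x<2 ^ N. \<Sum>c<2 ^ N. Sop N H i $$ (x, c) * R $$ (c, x))"
    using assms by (simp add: expect_eq_sum)
  also have "\<dots> = (\<Sum>x<2 ^ N. \<Sum>c<2 ^ N.
      if c = flip x i then z_parity (nbrs H i) x * R $$ (flip x i, x) else 0)"
    using assms by (intro sum.cong refl) (auto simp: Sop_entry z_parity_flip flip_eq_iff_eq_flip)
  also have "\<dots> = (\<Sum>x<2 ^ N. z_parity (nbrs H i) x * R $$ (flip x i, x))"
    using assms by (auto intro!: sum.cong simp: flip_less_power2)
  finally show ?thesis .
qed

section \<open>The graph state\<close>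

definition simple_graph_on :: "nat \<Rightarrow> graph \<Rightarrow> bool" where
  "simple_graph_on N H \<longleftrightarrow> verts H = {1..N} \<and>
     (\<forall>a b. (a, b) \<in> edges H \<longrightarrow> a \<in> {1..N} \<and> b \<in> {1..N} \<and> a \<noteq> b \<and> (b, a) \<in> edges H)"

lemma simple_graph_on_verts: "simple_graph_on N H \<Longrightarrow> verts H = {1..N}"
  unfolding simple_graph_on_def by blast

lemma simple_graph_on_nbrs_subset: "simple_graph_on N H \<Longrightarrow> nbrs H i \<subseteq> {1..N}"
  unfolding simple_graph_on_def nbrs_def by auto

lemma simple_graph_on_finite_nbrs: "simple_graph_on N H \<Longrightarrow> finite (nbrs H i)"
  by (rule finite_subset[OF simple_graph_on_nbrs_subset]) auto

lemma simple_graph_on_not_in_nbrs: "simple_graph_on N H \<Longrightarrow> i \<notin> nbrs H i"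
  unfolding simple_graph_on_def nbrs_def by auto

lemma simple_graph_on_edge_sym: "simple_graph_on N H \<Longrightarrow> (a, b) \<in> edges H \<longleftrightarrow> (b, a) \<in> edges H"
  unfolding simple_graph_on_def by blast

lemma Sop_mult_vec_entry:
  assumes "finite (nbrs H i)" "v \<in> carrier_vec (2 ^ N)" "1 \<le> i" "i \<le> N" "r < 2 ^ N"
  shows "(Sop N H i *\<^sub>v v) $ r = z_parity (nbrs H i) (flip r i) * v $ (flip r i)"
proof -
  have "(Sop N H i *\<^sub>v v) $ r = (\<Sum>c<2 ^ N. Sop N H i $$ (r, c) * v $ c)"
    using assms carrier_matD[OF Sop_carrier[of N H i]] by (simp add: scalar_prod_def atLeast0LessThan)
  also have "\<dots> = (\<Sum>c<2 ^ N. if c = flip r i then z_parity (nbrs H i) (flip r i) * v $ (flip r i) else 0)"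
  proof (rule sum.cong[OF refl])
    fix c :: nat assume "c \<in> {..<2 ^ N}"
    moreover have "r = flip c i \<longleftrightarrow> c = flip r i" by auto
    ultimately show "Sop N H i $$ (r, c) * v $ c =
        (if c = flip r i then z_parity (nbrs H i) (flip r i) * v $ (flip r i) else 0)"
      using assms by (auto simp: Sop_entry)
  qed
  also have "\<dots> = z_parity (nbrs H i) (flip r i) * v $ (flip r i)"
    using flip_less_power2[OF assms(5,3,4)] by simp
  finally show ?thesis .
qed

lemma Sop_fixed_vec_flip:
  assumes "finite (nbrs H i)" "v \<in> carrier_vec (2 ^ N)" "Sop N H i *\<^sub>v v = v"
    and "1 \<le> i" "i \<le> N" "x < 2 ^ N"
  shows "v $ flip x i = z_parity (nbrs H i) x * v $ x"
  using Sop_mult_vec_entry[OF assms(1,2,4,5) flip_less_power2[OF assms(6,4,5)]] assms(3) by simp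

text \<open>The sign of \<open>x\<close> in the graph state \<open>\<Prod>\<^sub>e CZ\<^sub>e |+\<rangle>\<^sup>\<otimes>\<^sup>N\<close>: \<open>-1\<close> to the number of edges with both
  endpoints set in \<open>x\<close>.\<close>

definition edge_sign :: "graph \<Rightarrow> nat \<Rightarrow> nat \<Rightarrow> nat \<Rightarrow> complex" where
  "edge_sign H x a b =
     (if a < b \<and> (a, b) \<in> edges H \<and> qbit x a \<noteq> 0 \<and> qbit x b \<noteq> 0 then -1 else 1)"

definition graph_sign :: "nat \<Rightarrow> graph \<Rightarrow> nat \<Rightarrow> complex" where
  "graph_sign N H x = (\<Prod>a\<in>{1..N}. \<Prod>b\<in>{1..N}. edge_sign H x a b)"

lemma graph_sign_square: "graph_sign N H x * graph_sign N H x = 1"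
  unfolding graph_sign_def prod.distrib[symmetric]
  by (intro prod.neutral ballI) (simp add: edge_sign_def)

lemma norm_graph_sign: "cmod (graph_sign N H x) = 1"
  unfolding graph_sign_def prod_norm[symmetric]
  by (intro prod.neutral ballI) (simp add: edge_sign_def)

lemma edge_sign_flip:
  assumes "1 \<le> i" "a \<in> {1..N}" "b \<in> {1..N}"
  shows "edge_sign H (flip x i) a b * edge_sign H x a b =
    (if a = i then (if i < b \<and> (i, b) \<in> edges H \<and> qbit x b \<noteq> 0 then -1 else 1) else 1) *
    (if b = i then (if a < i \<and> (a, i) \<in> edges H \<and> qbit x a \<noteq> 0 then -1 else 1) else 1)"
proof -
  have "qbit (flip x i) a = (if a = i then 1 - qbit x i else qbit x a)"
    "qbit (flip x i) b = (if b = i then 1 - qbit x i else qbit x b)"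
    using assms by (simp_all add: qbit_flip)
  then show ?thesis
    unfolding edge_sign_def using qbit_le_1[of x i] qbit_le_1[of x a] qbit_le_1[of x b]
    by (cases "a = i"; cases "b = i"; cases "a < b"; auto)
qed

lemma prod_prod_row_col:
  assumes "finite S" "i \<in> S"
  shows "(\<Prod>a\<in>S. \<Prod>b\<in>S. (if a = i then f b else 1) * (if b = i then g a else 1))
    = (\<Prod>j\<in>S. f j * g j)"
proof -
  have row: "(\<Prod>b\<in>S. (if a = i then f b else 1) * (if b = i then g a else 1))
      = (if a = i then prod f S else 1) * g a" for a
    using assms by (simp add: prod.distrib prod.delta)
  have "(\<Prod>a\<in>S. \<Prod>b\<in>S. (if a = i then f b else 1) * (if b = i then g a else 1))
      = (\<Prod>a\<in>S. (if a = i then prod f S else 1) * g a)"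
    by (simp only: row)
  also have "\<dots> = prod f S * prod g S"
    using assms by (simp add: prod.distrib prod.delta)
  finally show ?thesis
    by (simp only: prod.distrib)
qed

text \<open>In the double product over ordered pairs, flipping qubit \<open>i\<close> only changes the factors
  of the edges at \<open>i\<close>, each by the \<open>Z\<close>-sign of the other endpoint.\<close>

lemma graph_sign_flip:
  assumes G: "simple_graph_on N H" and i: "1 \<le> i" "i \<le> N"
  shows "graph_sign N H (flip x i) = z_parity (nbrs H i) x * graph_sign N H x"
proof -
  define A where "A b = (if i < b \<and> (i, b) \<in> edges H \<and> qbit x b \<noteq> 0 then -1 else 1 :: complex)" for b
  define B where "B a = (if a < i \<and> (a, i) \<in> edges H \<and> qbit x a \<noteq> 0 then -1 else 1 :: complex)" for a
  have "graph_sign N H (flip x i) * graph_sign N H x =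
        (\<Prod>a\<in>{1..N}. \<Prod>b\<in>{1..N}. (if a = i then A b else 1) * (if b = i then B a else 1))"
    unfolding graph_sign_def prod.distrib[symmetric]
  proof (intro prod.cong refl)
    fix a b assume "a \<in> {1..N}" "b \<in> {1..N}"
    then show "edge_sign H (flip x i) a b * edge_sign H x a b =
        (if a = i then A b else 1) * (if b = i then B a else 1)"
      unfolding A_def B_def by (rule edge_sign_flip[OF i(1)])
  qed
  also have "\<dots> = (\<Prod>j\<in>{1..N}. A j * B j)"
    using i by (intro prod_prod_row_col) auto
  also have "\<dots> = (\<Prod>j\<in>{1..N}. if j \<in> nbrs H i then z_sign j x else 1)"
  proof (rule prod.cong[OF refl])
    fix j
    have "(j, i) \<in> edges H \<longleftrightarrow> (i, j) \<in> edges H" "(i, i) \<notin> edges H"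
      using simple_graph_on_edge_sym[OF G, of j i] simple_graph_on_not_in_nbrs[OF G, of i]
      by (simp_all add: nbrs_def)
    then show "A j * B j = (if j \<in> nbrs H i then z_sign j x else 1)"
      unfolding A_def B_def z_sign_def nbrs_def by (cases "i < j"; cases "j < i"; auto)
  qed
  also have "\<dots> = z_parity (nbrs H i) x"
    using simple_graph_on_nbrs_subset[OF G, of i]
    by (simp add: prod.inter_restrict[symmetric] z_parity_def Int_absorb1)
  finally have "graph_sign N H (flip x i) * graph_sign N H x = z_parity (nbrs H i) x" .
  then show ?thesis
    by (metis graph_sign_square mult.assoc mult.right_neutral)
qed

definition stabilised_state :: "nat \<Rightarrow> graph \<Rightarrow> complex vec \<Rightarrow> bool" where
  "stabilised_state N H v \<longleftrightarrow> v \<in> carrier_vec (2 ^ N) \<and> (\<Sum>a<2 ^ N. (cmod (v $ a))\<^sup>2) = 1 \<and>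
     (\<forall>i \<in> verts H. Sop N H i *\<^sub>v v = v)"

definition graph_state_vec :: "nat \<Rightarrow> graph \<Rightarrow> complex vec" where
  "graph_state_vec N H = vec (2 ^ N) (\<lambda>x. graph_sign N H x / complex_of_real (sqrt (2 ^ N)))"

lemma stabilised_graph_state_vec:
  assumes G: "simple_graph_on N H"
  shows "stabilised_state N H (graph_state_vec N H)"
proof -
  have "(\<Sum>a<2 ^ N. (cmod (graph_state_vec N H $ a))\<^sup>2) = (\<Sum>a<(2::nat) ^ N. 1 / 2 ^ N)"
    by (intro sum.cong refl) (simp add: graph_state_vec_def norm_divide norm_graph_sign power_divide)
  moreover have "Sop N H i *\<^sub>v graph_state_vec N H = graph_state_vec N H" if i: "i \<in> {1..N}" for i
  proof (rule eq_vecI)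
    fix r assume "r < dim_vec (graph_state_vec N H)"
    then have r: "r < 2 ^ N" by (simp add: graph_state_vec_def)
    have "graph_sign N H r = z_parity (nbrs H i) (flip r i) * graph_sign N H (flip r i)"
      using graph_sign_flip[OF G, of i "flip r i"] i by simp
    then show "(Sop N H i *\<^sub>v graph_state_vec N H) $ r = graph_state_vec N H $ r"
      using i r flip_less_power2[OF r, of i]
      by (simp add: Sop_mult_vec_entry simple_graph_on_finite_nbrs[OF G] graph_state_vec_def)
  qed (use carrier_matD[OF Sop_carrier[of N H i]] in \<open>simp add: graph_state_vec_def\<close>)
  ultimately show ?thesis
    by (simp add: stabilised_state_def simple_graph_on_verts[OF G] graph_state_vec_def)
qed

lemma stabilised_state_flip:
  assumes G: "simple_graph_on N H" and v: "stabilised_state N H v"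
    and "1 \<le> i" "i \<le> N" "x < 2 ^ N"
  shows "v $ flip x i = z_parity (nbrs H i) x * v $ x"
  using assms simple_graph_on_finite_nbrs[OF G]
  by (intro Sop_fixed_vec_flip) (auto simp: stabilised_state_def simple_graph_on_verts[OF G])

lemma stabilised_state_norm_eq:
  assumes G: "simple_graph_on N H" and v: "stabilised_state N H v" and "x < 2 ^ N"
  shows "cmod (v $ x) = cmod (v $ 0)"
  using \<open>x < 2 ^ N\<close>
proof (induction rule: flip_induct)
  case (flip x i)
  have "v $ flip x i = z_parity (nbrs H i) x * v $ x"
    using stabilised_state_flip[OF G v flip(2,3,1)] .
  then show ?case
    using flip(4) by (simp add: norm_mult norm_z_parity)
qed (rule refl)

lemma stabilised_state_norm_square:
  assumes G: "simple_graph_on N H" and v: "stabilised_state N H v" and x: "x < 2 ^ N"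
  shows "(cmod (v $ x))\<^sup>2 = 1 / 2 ^ N"
proof -
  have "1 = (\<Sum>a<(2::nat) ^ N. (cmod (v $ a))\<^sup>2)"
    using v by (simp add: stabilised_state_def)
  also have "\<dots> = (\<Sum>a<(2::nat) ^ N. (cmod (v $ 0))\<^sup>2)"
    by (intro sum.cong refl) (metis lessThan_iff stabilised_state_norm_eq[OF G v])
  also have "\<dots> = real (2 ^ N) * (cmod (v $ 0))\<^sup>2"
    by (simp only: sum_constant card_lessThan)
  finally have "real (2 ^ N) * (cmod (v $ 0))\<^sup>2 = 1" ..
  then show ?thesis
    unfolding stabilised_state_norm_eq[OF G v x] by (simp add: eq_divide_eq mult.commute)
qed

text \<open>Two stabilised states are proportional, since both propagate along flips by the same
  signs.\<close>

lemma stabilised_state_cross_eq: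
  assumes G: "simple_graph_on N H" and v: "stabilised_state N H v" and u: "stabilised_state N H u"
    and "x < 2 ^ N"
  shows "v $ x * u $ 0 = u $ x * v $ 0"
  using \<open>x < 2 ^ N\<close>
proof (induction rule: flip_induct)
  case (flip x i)
  have "v $ flip x i = z_parity (nbrs H i) x * v $ x" "u $ flip x i = z_parity (nbrs H i) x * u $ x"
    using stabilised_state_flip[OF G v flip(2,3,1)] stabilised_state_flip[OF G u flip(2,3,1)] .
  then show ?case
    using flip(4) by (simp add: mult.assoc)
qed (rule mult.commute)

lemma stabilised_state_outer_unique:
  assumes G: "simple_graph_on N H" and v: "stabilised_state N H v" and u: "stabilised_state N H u"
  shows "outer v = outer u"
proof (rule eq_matI)
  have dims: "dim_vec v = 2 ^ N" "dim_vec u = 2 ^ N"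
    using v u by (auto simp: stabilised_state_def)
  then show "dim_row (outer v) = dim_row (outer u)" "dim_col (outer v) = dim_col (outer u)"
    by (simp_all add: outer_def)
  fix a b assume "a < dim_row (outer u)" "b < dim_col (outer u)"
  then have ab: "a < 2 ^ N" "b < 2 ^ N" using dims by (auto simp: outer_def)
  have v0: "v $ 0 * cnj (v $ 0) = u $ 0 * cnj (u $ 0)" "v $ 0 * cnj (v $ 0) \<noteq> 0"
    unfolding complex_norm_square[symmetric]
    using stabilised_state_norm_square[OF G v, of 0] stabilised_state_norm_square[OF G u, of 0] by simp_all
  have "(v $ a * cnj (v $ b)) * (v $ 0 * cnj (v $ 0)) = (v $ a * u $ 0) * cnj (v $ b * u $ 0)"
    unfolding v0(1) by (simp add: algebra_simps)
  also have "\<dots> = (u $ a * v $ 0) * cnj (u $ b * v $ 0)"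
    using stabilised_state_cross_eq[OF G v u] ab by simp
  also have "\<dots> = (u $ a * cnj (u $ b)) * (v $ 0 * cnj (v $ 0))"
    by (simp add: algebra_simps)
  finally show "outer v $$ (a, b) = outer u $$ (a, b)"
    using ab dims v0(2) by (simp add: outer_def)
qed

lemma graph_state_dm_eq_outer:
  assumes G: "simple_graph_on N H"
  obtains v where "stabilised_state N H v" "graph_state_dm N H = outer v"
proof -
  have P: "(\<exists>v \<in> carrier_vec (2 ^ N). (\<Sum>a<2 ^ N. (cmod (v $ a))\<^sup>2) = 1 \<and>
             (\<forall>i \<in> verts H. Sop N H i *\<^sub>v v = v) \<and> \<rho> = outer v)
        \<longleftrightarrow> (\<exists>v. stabilised_state N H v \<and> \<rho> = outer v)" for \<rho>
    unfolding stabilised_state_def by blast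
  have "\<exists>!\<rho>. \<exists>v. stabilised_state N H v \<and> \<rho> = outer v"
  proof (rule ex1I)
    show "\<exists>v. stabilised_state N H v \<and> outer (graph_state_vec N H) = outer v"
      using stabilised_graph_state_vec[OF G] by blast
  next
    fix \<rho> assume "\<exists>v. stabilised_state N H v \<and> \<rho> = outer v"
    then show "\<rho> = outer (graph_state_vec N H)"
      using stabilised_state_outer_unique[OF G _ stabilised_graph_state_vec[OF G]] by blast
  qed
  then have "\<exists>v. stabilised_state N H v \<and> graph_state_dm N H = outer v"
    unfolding graph_state_dm_def P by (rule theI')
  then show ?thesis using that by blast
qed

lemma graph_state_dm_flip_entry:
  assumes G: "simple_graph_on N H" and i: "1 \<le> i" "i \<le> N" and x: "x < 2 ^ N"
  shows "graph_state_dm N H $$ (flip x i, x) = z_parity (nbrs H i) x / 2 ^ N"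
proof -
  obtain v where v: "stabilised_state N H v" and dm: "graph_state_dm N H = outer v"
    using graph_state_dm_eq_outer[OF G] .
  have "dim_vec v = 2 ^ N"
    using v by (simp add: stabilised_state_def)
  then have "graph_state_dm N H $$ (flip x i, x) = z_parity (nbrs H i) x * (v $ x * cnj (v $ x))"
    using x flip_less_power2[OF x i] by (simp add: dm outer_def stabilised_state_flip[OF G v i x])
  also have "\<dots> = z_parity (nbrs H i) x / 2 ^ N"
    unfolding complex_norm_square[symmetric] stabilised_state_norm_square[OF G v x] by simp
  finally show ?thesis .
qed

section \<open>Losing qubits\<close>

text \<open>Basis indices split into the bits on the kept qubits and the bits on the lost qubits \<open>L\<close>.\<close>

definition configs_off :: "nat \<Rightarrow> nat set \<Rightarrow> nat set" where
  "configs_off N L = {a. a < 2 ^ N \<and> (\<forall>l\<in>L. qbit a l = 0)}"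

definition configs_on :: "nat \<Rightarrow> nat set \<Rightarrow> nat set" where
  "configs_on N L = {z. z < 2 ^ N \<and> (\<forall>i\<in>{1..N} - L. qbit z i = 0)}"

lemma bit_configs_off: "a \<in> configs_off N L \<Longrightarrow> bit a n \<Longrightarrow> n < N \<and> Suc n \<notin> L"
  unfolding configs_off_def less_power2_iff_bits by (auto simp: qbit_eq_0_iff)

lemma bit_configs_on: "z \<in> configs_on N L \<Longrightarrow> bit z n \<Longrightarrow> n < N \<and> Suc n \<in> L"
  unfolding configs_on_def less_power2_iff_bits by (force simp: qbit_eq_0_iff)

lemma bit_add_configs:
  "a \<in> configs_off N L \<Longrightarrow> z \<in> configs_on N L \<Longrightarrow> bit (a + z) n \<longleftrightarrow> bit a n \<or> bit z n"
  using bit_configs_off bit_configs_on by (metis bit_disjunctive_add_iff)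

lemma add_configs_less_power2: "a \<in> configs_off N L \<Longrightarrow> z \<in> configs_on N L \<Longrightarrow> a + z < 2 ^ N"
  unfolding less_power2_iff_bits using bit_add_configs bit_configs_off bit_configs_on by blast

definition select_bits :: "nat \<Rightarrow> nat \<Rightarrow> (nat \<Rightarrow> bool) \<Rightarrow> nat" where
  "select_bits N w P = horner_sum of_bool 2 (map (\<lambda>n. bit w n \<and> P n) [0..<N])"

lemma bit_select_bits: "bit (select_bits N w P) n \<longleftrightarrow> n < N \<and> bit w n \<and> P n"
  unfolding select_bits_def by (auto simp: bit_horner_sum_bit_iff)

lemma bij_betw_add_configs:
  assumes L: "L \<subseteq> {1..N}"
  shows "bij_betw (\<lambda>(a, z). a + z) (configs_off N L \<times> configs_on N L) {..<2 ^ N}"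
proof (rule bij_betw_imageI)
  have bits: "bit a n \<longleftrightarrow> bit (a + z) n \<and> Suc n \<notin> L" "bit z n \<longleftrightarrow> bit (a + z) n \<and> Suc n \<in> L"
    if "a \<in> configs_off N L" "z \<in> configs_on N L" for a z n
    using bit_add_configs[OF that] bit_configs_off[OF that(1)] bit_configs_on[OF that(2)] by blast+
  show "inj_on (\<lambda>(a, z). a + z) (configs_off N L \<times> configs_on N L)"
  proof (rule inj_onI, clarify)
    fix a z a' z'
    assume h: "a \<in> configs_off N L" "z \<in> configs_on N L" "a' \<in> configs_off N L" "z' \<in> configs_on N L"
      and "a + z = a' + z'"
    then show "a = a' \<and> z = z'"
      by (intro conjI bit_eqI) (simp_all add: bits[OF h(1,2)] bits[OF h(3,4)])
  qed
  show "(\<lambda>(a, z). a + z) ` (configs_off N L \<times> configs_on N L) = {..<2 ^ N}"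
  proof
    show "(\<lambda>(a, z). a + z) ` (configs_off N L \<times> configs_on N L) \<subseteq> {..<2 ^ N}"
      using add_configs_less_power2 by auto
  next
    show "{..<2 ^ N} \<subseteq> (\<lambda>(a, z). a + z) ` (configs_off N L \<times> configs_on N L)"
    proof
      fix w :: nat assume "w \<in> {..<2 ^ N}"
      then have w: "bit w n \<Longrightarrow> n < N" for n by (auto simp: less_power2_iff_bits)
      define a where "a = select_bits N w (\<lambda>n. Suc n \<notin> L)"
      define z where "z = select_bits N w (\<lambda>n. Suc n \<in> L)"
      have a: "a \<in> configs_off N L"
        using L by (auto simp: configs_off_def less_power2_iff_bits qbit_eq_0_iff a_def bit_select_bits)
      have z: "z \<in> configs_on N L"
        by (auto simp: configs_on_def less_power2_iff_bits qbit_eq_0_iff z_def bit_select_bits)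
      have "bit (a + z) n \<longleftrightarrow> bit w n" for n
        unfolding bit_add_configs[OF a z] by (auto simp: a_def z_def bit_select_bits w)
      then have "w = a + z"
        by (intro bit_eqI) simp
      then show "w \<in> (\<lambda>(a, z). a + z) ` (configs_off N L \<times> configs_on N L)"
        using a z by auto
    qed
  qed
qed

lemma sum_configs_split:
  assumes "L \<subseteq> {1..N}"
  shows "(\<Sum>a\<in>configs_off N L. \<Sum>z\<in>configs_on N L. f (a + z)) = (\<Sum>w<2 ^ N. f w)"
  using sum.reindex_bij_betw[OF bij_betw_add_configs[OF assms], of f]
  by (simp add: sum.cartesian_product case_prod_unfold)

lemma lost_state_carrier [simp]: "lost_state N L D \<in> carrier_mat (2 ^ N) (2 ^ N)"
  by (simp add: lost_state_def)

lemma lost_state_entry: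
  "x < 2 ^ N \<Longrightarrow> y < 2 ^ N \<Longrightarrow> lost_state N L D $$ (x, y) =
    (if \<forall>l\<in>L. qbit x l = 0 \<and> qbit y l = 0 then \<Sum>z\<in>configs_on N L. D $$ (x + z, y + z) else 0)"
  by (simp add: lost_state_def configs_on_def)

lemma lost_state_flip_lost_entry:
  assumes "x < 2 ^ N" "1 \<le> i" "i \<le> N" "i \<in> L"
  shows "lost_state N L D $$ (flip x i, x) = 0"
proof -
  have "qbit (flip x i) i = 1 - qbit x i"
    using assms by (simp add: qbit_flip)
  then have "\<not> (\<forall>l\<in>L. qbit (flip x i) l = 0 \<and> qbit x l = 0)"
    using assms(4) by force
  then show ?thesis
    by (simp only: lost_state_entry[OF flip_less_power2[OF assms(1-3)] assms(1)] if_False)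
qed

lemma flip_configs_off:
  assumes "a \<in> configs_off N L" "1 \<le> i" "i \<le> N" "i \<notin> L" "L \<subseteq> {1..N}"
  shows "flip a i \<in> configs_off N L"
  using assms flip_less_power2[of a N i] by (auto simp: configs_off_def qbit_flip subset_iff)

lemma flip_add_config:
  assumes a: "a \<in> configs_off N L" and z: "z \<in> configs_on N L"
    and i: "1 \<le> i" "i \<le> N" "i \<notin> L" and L: "L \<subseteq> {1..N}"
  shows "flip a i + z = flip (a + z) i"
proof -
  have "\<not> bit z (i - 1)"
    using bit_configs_on[OF z, of "i - 1"] i by auto
  then show ?thesis
    using bit_add_configs[OF flip_configs_off[OF a i L] z] bit_add_configs[OF a z]
    by (intro bit_eqI) (auto simp: bit_flip_iff)
qed

lemma z_parity_add_config:
  assumes a: "a \<in> configs_off N L" and z: "z \<in> configs_on N L" and M: "finite M" "M \<subseteq> {1..N}"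
  shows "z_parity M a = z_parity (M - L) (a + z)"
proof -
  have "z_parity M a = z_parity (M - L) a"
    unfolding z_parity_def
    by (rule prod.mono_neutral_right) (use a M in \<open>auto simp: configs_off_def z_sign_def\<close>)
  also have "\<dots> = z_parity (M - L) (a + z)"
    unfolding z_parity_def
  proof (rule prod.cong[OF refl])
    fix j assume j: "j \<in> M - L"
    then have "\<not> bit z (j - 1)"
      using bit_configs_on[OF z, of "j - 1"] M(2) by auto
    then show "z_sign j a = z_sign j (a + z)"
      by (simp add: z_sign_def qbit_eq_0_iff bit_add_configs[OF a z])
  qed
  finally show ?thesis .
qed

text \<open>The entries of \<open>\<rho>\<close> pairing \<open>x\<close> with its flip at a kept qubit are sums over the lost bits;
  summed against a \<open>Z\<close>-parity they reassemble into a sum over the whole basis.\<close>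

lemma sum_lost_state_flip:
  assumes L: "L \<subseteq> {1..N}" and i: "1 \<le> i" "i \<le> N" "i \<notin> L" and M: "finite M" "M \<subseteq> {1..N}"
  shows "(\<Sum>x<2 ^ N. z_parity M x * lost_state N L D $$ (flip x i, x))
       = (\<Sum>w<2 ^ N. z_parity (M - L) w * D $$ (flip w i, w))"
proof -
  have "(\<Sum>x<2 ^ N. z_parity M x * lost_state N L D $$ (flip x i, x))
      = (\<Sum>x<2 ^ N. if x \<in> configs_off N L
           then z_parity M x * (\<Sum>z\<in>configs_on N L. D $$ (flip x i + z, x + z)) else 0)"
  proof (rule sum.cong[OF refl])
    fix x :: nat assume x: "x \<in> {..<2 ^ N}"
    have "qbit (flip x i) l = qbit x l" if "l \<in> L" for l
      using that L i by (subst qbit_flip) auto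
    then have "(\<forall>l\<in>L. qbit (flip x i) l = 0 \<and> qbit x l = 0) \<longleftrightarrow> x \<in> configs_off N L"
      using x by (auto simp: configs_off_def)
    then show "z_parity M x * lost_state N L D $$ (flip x i, x) = (if x \<in> configs_off N L
        then z_parity M x * (\<Sum>z\<in>configs_on N L. D $$ (flip x i + z, x + z)) else 0)"
      using x i flip_less_power2[of x N i] by (simp add: lost_state_entry)
  qed
  also have "\<dots> = (\<Sum>x\<in>configs_off N L. z_parity M x * (\<Sum>z\<in>configs_on N L. D $$ (flip x i + z, x + z)))"
    by (subst sum.inter_restrict[symmetric]) (auto simp: configs_off_def intro!: sum.cong)
  also have "\<dots> = (\<Sum>x\<in>configs_off N L. \<Sum>z\<in>configs_on N L.
      z_parity (M - L) (x + z) * D $$ (flip (x + z) i, x + z))"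
    unfolding sum_distrib_left
    by (intro sum.cong refl) (simp add: flip_add_config[OF _ _ i L] z_parity_add_config[OF _ _ M])
  also have "\<dots> = (\<Sum>w<2 ^ N. z_parity (M - L) w * D $$ (flip w i, w))"
    by (rule sum_configs_split[OF L])
  finally show ?thesis .
qed

definition survives :: "graph \<Rightarrow> nat set \<Rightarrow> nat \<Rightarrow> bool" where
  "survives G L i \<longleftrightarrow> i \<notin> L \<and> nbrs G i \<inter> L = {}"

lemma nbrs_induced_del: "nbrs (induced_del H L) i = (if i \<in> L then {} else nbrs H i - L)"
  by (auto simp: induced_del_def nbrs_def edges_def)

lemma verts_induced_del: "verts (induced_del H L) = verts H - L"
  by (simp add: induced_del_def verts_def)

text \<open>Stated for \<open>S\<^sub>i\<close> of any graph \<open>H\<close> that agrees with \<open>G\<close> at \<open>i\<close> outside \<open>L\<close>, so that it also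
  covers \<open>G' = G[V \ L]\<close>.\<close>

lemma expect_Sop_lost_graph_state:
  assumes G: "simple_graph_on N G" and L: "L \<subseteq> {1..N}" and i: "1 \<le> i" "i \<le> N"
    and sub: "nbrs H i \<subseteq> nbrs G i" and eq: "i \<notin> L \<Longrightarrow> nbrs H i - L = nbrs G i - L"
  shows "expect (Sop N H i) (lost_state N L (graph_state_dm N G)) = of_bool (survives G L i)"
proof -
  let ?D = "graph_state_dm N G"
  let ?\<rho> = "lost_state N L ?D"
  have H: "finite (nbrs H i)" "i \<notin> nbrs H i" "0 \<notin> nbrs H i" "nbrs H i \<subseteq> {1..N}"
    using sub simple_graph_on_nbrs_subset[OF G, of i] simple_graph_on_not_in_nbrs[OF G, of i]
    by (auto intro: finite_subset)
  have expect_eq: "expect (Sop N H i) ?\<rho> = (\<Sum>x<2 ^ N. z_parity (nbrs H i) x * ?\<rho> $$ (flip x i, x))"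
    by (rule expect_Sop[OF H(1-3) i lost_state_carrier])
  show ?thesis
  proof (cases "i \<in> L")
    case True
    then show ?thesis
      using i by (simp add: expect_eq survives_def lost_state_flip_lost_entry)
  next
    case False
    have "expect (Sop N H i) ?\<rho> = (\<Sum>w<2 ^ N. z_parity (nbrs H i - L) w * ?D $$ (flip w i, w))"
      unfolding expect_eq by (rule sum_lost_state_flip[OF L i False H(1,4)])
    also have "\<dots> = (\<Sum>w<2 ^ N. z_parity (nbrs G i \<inter> L) w) / 2 ^ N"
      unfolding sum_divide_distrib
      using graph_state_dm_flip_entry[OF G i] eq[OF False]
        z_parity_diff_mult[OF simple_graph_on_finite_nbrs[OF G], of i L]
      by (intro sum.cong refl) (simp add: mult.assoc[symmetric])
    also have "\<dots> = of_bool (survives G L i)"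
      using False simple_graph_on_finite_nbrs[OF G, of i] simple_graph_on_nbrs_subset[OF G, of i]
      by (subst sum_z_parity) (auto simp: survives_def)
    finally show ?thesis .
  qed
qed

lemma expect_Iop_lost_graph_state:
  assumes G: "simple_graph_on N G" and L: "L \<subseteq> {1..N}" and r: "r \<in> {1..N}" "r \<notin> L"
    and H: "H \<in> {G, induced_del G L}"
  shows "expect (Iop N H r) (lost_state N L (graph_state_dm N G)) = complex_of_real
     (sqrt 2 * real (nmax H) * of_bool (survives G L r)
      + sqrt 2 * real (card {i \<in> nbrs G r. survives G L i})
      + real (card {i \<in> verts G - cnbrs G r. survives G L i}))"
proof -
  let ?\<rho> = "lost_state N L (graph_state_dm N G)"
  have nbrs_H: "nbrs H i = (if H = G then nbrs G i else if i \<in> L then {} else nbrs G i - L)" for i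
    using H by (auto simp: nbrs_induced_del)
  have verts_H: "verts H - cnbrs H r = (if H = G then verts G - cnbrs G r else verts G - cnbrs G r - L)"
    using H r by (auto simp: verts_induced_del cnbrs_def nbrs_H)
  have expect_S: "expect (Sop N H i) ?\<rho> = of_bool (survives G L i)" if "i \<in> {1..N}" for i
    using that by (intro expect_Sop_lost_graph_state[OF G L]) (auto simp: nbrs_H)
  have sum_S: "(\<Sum>i\<in>S. expect (Sop N H i) ?\<rho>) = of_nat (card {i \<in> S. survives G L i})"
    if "S \<subseteq> {1..N}" for S
  proof -
    have "(\<Sum>i\<in>S. expect (Sop N H i) ?\<rho>) = (\<Sum>i\<in>S. of_bool (survives G L i))"
      using that by (intro sum.cong refl) (auto simp: expect_S)
    also have "\<dots> = of_nat (card (S \<inter> {i. survives G L i}))"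
      using finite_subset[OF that] by simp
    finally show ?thesis
      by (simp add: Collect_conj_eq)
  qed
  have subsets: "nbrs H r \<subseteq> {1..N}" "verts H - cnbrs H r \<subseteq> {1..N}"
    using simple_graph_on_nbrs_subset[OF G, of r] simple_graph_on_verts[OF G]
    by (auto simp: nbrs_H verts_H)
  have survivors: "{i \<in> nbrs H r. survives G L i} = {i \<in> nbrs G r. survives G L i}"
    "{i \<in> verts H - cnbrs H r. survives G L i} = {i \<in> verts G - cnbrs G r. survives G L i}"
    using r(2) by (auto simp: nbrs_H verts_H survives_def)
  have finite: "finite (nbrs H r)" "finite (verts H - cnbrs H r)"
    using subsets by (auto intro: finite_subset)
  show ?thesis
    unfolding expect_Iop[OF finite lost_state_carrier] sum_S[OF subsets(1)] sum_S[OF subsets(2)]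
      survivors expect_S[OF r(1)]
    by simp
qed

section \<open>The dense center graph\<close>

lemma verts_dense_center: "verts (dense_center m) = {1..2 * m}"
  by (simp add: dense_center_def verts_def)

lemma edges_dense_center: "(a, b) \<in> edges (dense_center m) \<longleftrightarrow>
   (a \<in> {1..m} \<and> b \<in> {1..m} \<and> a \<noteq> b) \<or> (a \<in> {1..m} \<and> b = m + a) \<or> (b \<in> {1..m} \<and> a = m + b)"
  by (auto simp: dense_center_def edges_def)

lemma simple_graph_on_dense_center: "simple_graph_on (2 * m) (dense_center m)"
  unfolding simple_graph_on_def verts_dense_center edges_dense_center by auto

lemma nbrs_dense_center_center:
  "k \<in> {1..m} \<Longrightarrow> nbrs (dense_center m) k = insert (m + k) ({1..m} - {k})"
  unfolding nbrs_def edges_dense_center by auto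

lemma nbrs_dense_center_leaf: "k \<in> {1..m} \<Longrightarrow> nbrs (dense_center m) (m + k) = {k}"
  unfolding nbrs_def edges_dense_center by auto

lemma dense_center_vertex_cases:
  assumes "(v::nat) \<in> {1..2 * m}"
  obtains "v \<in> {1..m}" | k where "k \<in> {1..m}" "v = m + k"
proof (cases "v \<le> m")
  case False
  then have "v - m \<in> {1..m}" "v = m + (v - m)" using assms by auto
  then show ?thesis using that(2) by blast
qed (use assms that(1) in auto)

lemma deg_dense_center_center: "k \<in> {1..m} \<Longrightarrow> deg (dense_center m) k = m"
  by (auto simp: deg_def nbrs_dense_center_center)

lemma deg_dense_center_leaf: "k \<in> {1..m} \<Longrightarrow> deg (dense_center m) (m + k) = 1"
  by (simp add: deg_def nbrs_dense_center_leaf)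

lemma deg_dense_center_le: "v \<in> {1..2 * m} \<Longrightarrow> deg (dense_center m) v \<le> m"
  by (elim dense_center_vertex_cases) (auto simp: deg_dense_center_center deg_dense_center_leaf)

lemma nmax_dense_center: "1 \<le> m \<Longrightarrow> nmax (dense_center m) = m"
  unfolding nmax_def verts_dense_center
  by (rule Max_eqI) (auto simp: deg_dense_center_le deg_dense_center_center intro: image_eqI[of _ _ 1])

lemma roots_dense_center:
  assumes "2 \<le> m"
  shows "roots (dense_center m) = {1..m}"
proof -
  have "deg (dense_center m) v = m \<longleftrightarrow> v \<in> {1..m}" if "v \<in> {1..2 * m}" for v
    using that assms by (elim dense_center_vertex_cases) (auto simp: deg_dense_center_center deg_dense_center_leaf)
  then show ?thesis
    using assms by (auto simp: roots_def nmax_dense_center verts_dense_center)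
qed

lemma survives_dense_center:
  assumes "L \<subseteq> {m + 1..2 * m}" "k \<in> {1..m}"
  shows "survives (dense_center m) L k \<longleftrightarrow> m + k \<notin> L"
    and "survives (dense_center m) L (m + k) \<longleftrightarrow> m + k \<notin> L"
  using assms by (auto simp: survives_def nbrs_dense_center_center nbrs_dense_center_leaf)

lemma survivors_dense_center:
  assumes L: "L \<subseteq> {m + 1..2 * m}" and j: "j \<in> {1..m}" "m + j \<notin> L"
  defines "G \<equiv> dense_center m"
  shows "card {i \<in> nbrs G j. survives G L i} = m - card L"
    and "card {i \<in> verts G - cnbrs G j. survives G L i} = m - 1 - card L"
proof -
  let ?leaves = "{m + 1..2 * m} - {m + j} - L"
  have L_sub: "L \<subseteq> {m + 1..2 * m} - {m + j}"
    using L j by blast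
  have card_L: "card L \<le> m - 1"
    using card_mono[OF _ L_sub] j by simp
  have card_leaves: "card ?leaves = m - 1 - card L"
    using L_sub j by (subst card_Diff_subset) (auto intro: finite_subset)
  have survives_leaf: "survives G L i \<longleftrightarrow> i \<notin> L" if "i \<in> {m + 1..2 * m}" for i
  proof -
    have "i - m \<in> {1..m}" "m + (i - m) = i"
      using that by auto
    then show ?thesis
      using survives_dense_center(2)[OF L, of "i - m"] by (simp add: G_def)
  qed
  have "verts G - cnbrs G j = {m + 1..2 * m} - {m + j}"
    using j by (auto simp: G_def verts_dense_center cnbrs_def nbrs_dense_center_center)
  then have "{i \<in> verts G - cnbrs G j. survives G L i} = ?leaves"
    using survives_leaf by blast
  then show "card {i \<in> verts G - cnbrs G j. survives G L i} = m - 1 - card L"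
    using card_leaves by simp
  have centers: "{k \<in> {1..m} - {j}. m + k \<notin> L} = (\<lambda>i. i - m) ` ?leaves"
  proof (intro equalityI subsetI)
    fix k assume "k \<in> {k \<in> {1..m} - {j}. m + k \<notin> L}"
    then have "m + k \<in> ?leaves" "k = m + k - m" by auto
    then show "k \<in> (\<lambda>i. i - m) ` ?leaves" by blast
  qed auto
  have "{i \<in> nbrs G j. survives G L i} = insert (m + j) {k \<in> {1..m} - {j}. m + k \<notin> L}"
    using j survives_dense_center[OF L] by (auto simp: G_def nbrs_dense_center_center)
  moreover have "card {k \<in> {1..m} - {j}. m + k \<notin> L} = m - 1 - card L"
    unfolding centers using card_leaves by (subst card_image) (auto simp: inj_on_def)
  ultimately show "card {i \<in> nbrs G j. survives G L i} = m - card L"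
    using card_L j by (simp, arith)
qed

lemma nmax_induced_del_dense_center:
  assumes L: "L \<subseteq> {m + 1..2 * m}" and j: "j \<in> {1..m}" "m + j \<notin> L"
  shows "nmax (induced_del (dense_center m) L) = m"
  unfolding nmax_def
proof (rule Max_eqI)
  let ?G = "dense_center m"
  show "finite (deg (induced_del ?G L) ` verts (induced_del ?G L))"
    by (simp add: verts_induced_del verts_dense_center)
  have "nbrs (induced_del ?G L) j = nbrs ?G j"
    using L j by (auto simp: nbrs_induced_del nbrs_dense_center_center)
  then have "deg (induced_del ?G L) j = m"
    using deg_dense_center_center[OF j(1)] by (simp add: deg_def)
  moreover have "j \<in> verts (induced_del ?G L)"
    using L j by (auto simp: verts_induced_del verts_dense_center)
  ultimately show "m \<in> deg (induced_del ?G L) ` verts (induced_del ?G L)"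
    by (metis image_eqI)
  fix d assume "d \<in> deg (induced_del ?G L) ` verts (induced_del ?G L)"
  then obtain v where v: "v \<in> {1..2 * m}" "v \<notin> L" "d = deg (induced_del ?G L) v"
    by (auto simp: verts_induced_del verts_dense_center)
  have "d \<le> deg ?G v"
    unfolding v(3) deg_def nbrs_induced_del
    using simple_graph_on_finite_nbrs[OF simple_graph_on_dense_center] by (auto intro: card_mono)
  also have "\<dots> \<le> m"
    using v(1) by (rule deg_dense_center_le)
  finally show "d \<le> m" .
qed

lemma expect_Iop_lost_dense_center:
  assumes L: "L \<subseteq> {m + 1..2 * m}" "card L < m" and j: "j \<in> {1..m}" "m + j \<notin> L"
    and H: "H \<in> {dense_center m, induced_del (dense_center m) L}"
  shows "expect (Iop (2 * m) H j) (lost_state (2 * m) L (graph_state_dm (2 * m) (dense_center m)))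
    = complex_of_real ((2 * sqrt 2 + 1) * real m - 1 - (sqrt 2 + 1) * real (card L))"
proof -
  let ?G = "dense_center m"
  have "nmax H = m"
    using H j nmax_dense_center[of m] nmax_induced_del_dense_center[OF L(1) j] by auto
  moreover have "survives ?G L j"
    using survives_dense_center(1)[OF L(1) j(1)] j(2) by simp
  moreover have "expect (Iop (2 * m) H j) (lost_state (2 * m) L (graph_state_dm (2 * m) ?G)) =
    complex_of_real (sqrt 2 * real (nmax H) * of_bool (survives ?G L j)
      + sqrt 2 * real (card {i \<in> nbrs ?G j. survives ?G L i})
      + real (card {i \<in> verts ?G - cnbrs ?G j. survives ?G L i}))"
    using L j H by (intro expect_Iop_lost_graph_state[OF simple_graph_on_dense_center]) auto
  ultimately show ?thesis
    unfolding survivors_dense_center[OF L(1) j]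
    using L(2) by (simp add: of_nat_diff algebra_simps)
qed

lemma violation_threshold_induced:
  fixes n c :: real
  shows "3 * n - 1 - c < (2 * sqrt 2 + 1) * n - 1 - (sqrt 2 + 1) * c
    \<longleftrightarrow> c < (sqrt 2 - 1) / sqrt 2 * (2 * n)"
proof -
  have "c < (sqrt 2 - 1) / sqrt 2 * (2 * n) \<longleftrightarrow> c * sqrt 2 < (sqrt 2 - 1) * (2 * n)"
    by (simp add: pos_less_divide_eq mult.commute)
  then show ?thesis
    by (simp add: algebra_simps)
qed

lemma violation_threshold:
  fixes n c :: real
  shows "3 * n - 1 < (2 * sqrt 2 + 1) * n - 1 - (sqrt 2 + 1) * c
    \<longleftrightarrow> c < (sqrt 2 - 1) / (sqrt 2 + 1) * (2 * n)"
proof -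
  have "c < (sqrt 2 - 1) / (sqrt 2 + 1) * (2 * n) \<longleftrightarrow> c * (sqrt 2 + 1) < (sqrt 2 - 1) * (2 * n)"
    by (simp add: pos_less_divide_eq add_pos_pos mult.commute)
  then show ?thesis
    by (simp add: algebra_simps)
qed

lemma betaC_dense_center: "1 \<le> m \<Longrightarrow> betaC (dense_center m) = 3 * real m - 1"
  by (simp add: betaC_def nmax_dense_center verts_dense_center)

lemma betaC_induced_del_dense_center:
  assumes L: "L \<subseteq> {m + 1..2 * m}" "card L < m" and j: "j \<in> {1..m}" "m + j \<notin> L"
  shows "betaC (induced_del (dense_center m) L) = 3 * real m - 1 - real (card L)"
proof -
  have "L \<subseteq> {1..2 * m}"
    using L(1) by auto
  then have "card (verts (induced_del (dense_center m) L)) = 2 * m - card L"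
    by (simp add: verts_induced_del verts_dense_center card_Diff_subset finite_subset)
  then show ?thesis
    using L(2) by (simp add: betaC_def nmax_induced_del_dense_center[OF L(1) j] of_nat_diff)
qed

theorem mainTheorem7:
  fixes m :: nat
  assumes "m \<ge> 2"
  defines "N \<equiv> 2 * m"
  defines "G \<equiv> dense_center m"
  shows "nmax G = m \<and> roots G = {1..m} \<and> betaC G = 3 / 2 * real N - 1 \<and>
    (\<forall>L j. L \<subseteq> {m + 1..2 * m} \<and> card L < m \<and> j \<in> {1..m} \<and> m + j \<notin> L \<longrightarrow>
      (let G' = induced_del G L;
           \<rho> = lost_state N L (graph_state_dm N G);
           val = (2 * sqrt 2 - 1) * real m + real N - 1 - (sqrt 2 + 1) * real (card L)
       in expect (Iop N G j) \<rho> = complex_of_real val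
        \<and> expect (Iop N G' j) \<rho> = complex_of_real val
        \<and> (Re (expect (Iop N G' j) \<rho>) > betaC G'
             \<longleftrightarrow> real (card L) < (sqrt 2 - 1) / sqrt 2 * real N)
        \<and> (Re (expect (Iop N G j) \<rho>) > betaC G
             \<longleftrightarrow> real (card L) < (sqrt 2 - 1) / (sqrt 2 + 1) * real N)))"
proof -
  have m: "1 \<le> m"
    using \<open>m \<ge> 2\<close> by simp
  have val: "(2 * sqrt 2 - 1) * real m + real (2 * m) - 1 - (sqrt 2 + 1) * c
      = (2 * sqrt 2 + 1) * real m - 1 - (sqrt 2 + 1) * c" for c
    by (simp add: algebra_simps)
  show ?thesis
    unfolding Let_def G_def N_def val
    using \<open>m \<ge> 2\<close>
    by (auto simp: nmax_dense_center[OF m] roots_dense_center betaC_dense_center[OF m]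
        expect_Iop_lost_dense_center betaC_induced_del_dense_center
        violation_threshold_induced violation_threshold)
qed

end
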